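(* For all $n\in\mathbb{Z}^+$ and all vectors $\zeta=(\zeta^j)_{j\in I_n}$, $\xi=(\xi^j)_{j\in I_n}$ of $\mathbb{R}^N$, $$\sup_{p\in I_n}\Big|\sum_{j,k\in I_n}\mathbb{E}^\gamma\big[\tilde J_n^{pj}\tilde J_n^{-pk}\big]\zeta^j\xi^k\Big|\le ab\,\|\zeta\|_2\|\xi\|_2.$$
   Context: For $n\ge0$, $I_n=\{-n,\dots,n\}$, $N=2n+1$, "$k\bmod I_n$" is the element of $I_n$ congruent to $k$ mod $N$, and $F_N=e^{2\pi i/N}$. $R_{\mathcal J}:\mathbb{Z}^2\to\mathbb{R}$ satisfies $|R_{\mathcal J}(k,l)|\le a_kb_l$ for positive sequences with $|k|^3a_k\to0$ and $\sum_lb_l<\infty$, $a=\sum_ka_k$, $b=\sum_kb_k$; $R_{\mathcal J}$ is the autocorrelation of a centered stationary Gaussian field on $\mathbb{Z}^2$ with strictly positive spectral density. Under $\gamma$, $J_n=(J_n^{ij})_{i,j\in I_n}$ are centered jointly Gaussian with $\mathbb{E}^\gamma[J_n^{ij}J_n^{kl}]=\frac1NR_{\mathcal J}((k-i)\bmod I_n,(l-j)\bmod I_n)$. $\tilde J_n^{pk}=\sum_{j\in I_n}J_n^{jk}F_N^{-jp}$ for $p,k\in I_n$ (discrete Fourier transform in the first index), with $-p$ understood in $I_n$. *)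

theory Defs
  imports "HOL-Probability.Probability"
begin

definition I :: "nat \<Rightarrow> int set" where
  "I n = {- int n .. int n}"

definition NN :: "nat \<Rightarrow> int" where
  "NN n = 2 * int n + 1"

definition modI :: "nat \<Rightarrow> int \<Rightarrow> int" where
  "modI n k = (k + int n) mod NN n - int n"

definition FN :: "nat \<Rightarrow> complex" where
  "FN n = cis (2 * pi / real_of_int (NN n))"

definition tJ :: "nat \<Rightarrow> (int \<Rightarrow> int \<Rightarrow> 'a \<Rightarrow> real) \<Rightarrow> int \<Rightarrow> int \<Rightarrow> 'a \<Rightarrow> complex" where
  "tJ n J p k \<omega> = (\<Sum>j\<in>I n. complex_of_real (J j k \<omega>) * FN n powi (- (j * p)))"

definition centered_gaussian_family :: "'a measure \<Rightarrow> 'i set \<Rightarrow> ('i \<Rightarrow> 'a \<Rightarrow> real) \<Rightarrow> bool" where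
  "centered_gaussian_family M S X \<longleftrightarrow>
     (\<forall>i\<in>S. X i \<in> borel_measurable M) \<and>
     (\<forall>c :: 'i \<Rightarrow> real.
        (AE \<omega> in M. (\<Sum>i\<in>S. c i * X i \<omega>) = 0) \<or>
        (\<exists>\<sigma>>0. distributed M lborel (\<lambda>\<omega>. \<Sum>i\<in>S. c i * X i \<omega>) (normal_density 0 \<sigma>)))"

definition spectral_density :: "(int \<times> int \<Rightarrow> real) \<Rightarrow> real \<Rightarrow> real \<Rightarrow> complex" where
  "spectral_density R \<theta>1 \<theta>2 =
     infsum (\<lambda>(k, l). complex_of_real (R (k, l)) * cis (- (real_of_int k * \<theta>1 + real_of_int l * \<theta>2))) UNIV"

text \<open>R is the autocorrelation of a centered stationary Gaussian field on Z^2 with strictly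
  positive spectral density (for absolutely summable R): R is even and its spectral density
  is real and strictly positive everywhere.\<close>
definition stationary_autocorr_pos_spectral :: "(int \<times> int \<Rightarrow> real) \<Rightarrow> bool" where
  "stationary_autocorr_pos_spectral R \<longleftrightarrow>
     (\<forall>k l. R (-k, -l) = R (k, l)) \<and>
     (\<forall>\<theta>1 \<theta>2. spectral_density R \<theta>1 \<theta>2 \<in> \<real> \<and> Re (spectral_density R \<theta>1 \<theta>2) > 0)"

definition norm2 :: "nat \<Rightarrow> (int \<Rightarrow> real) \<Rightarrow> real" where
  "norm2 n z = sqrt (\<Sum>j\<in>I n. (z j)\<^sup>2)"

end

theory Submission imports Defs begin

text \<open>Expanding both Fourier transforms, E[tJ^{pj} tJ^{qk}] is a double sum over the first indices
  of covariances, each weighted by a root of unity of modulus 1. The covariance bound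
  a(i'-i) b(k-j)/N summed over i' gives the partial sum of a, and the N values of i cancel the
  factor 1/N, so the second-moment matrix is dominated by (sum a) b(k-j). A cyclic Toeplitz
  matrix with entries b(k-j) has operator norm at most the l1-norm of b (Cauchy-Schwarz after
  shifting the summation index), which gives the bound with partial sums of a and b. Finally
  |k|^3 a_k \<rightarrow> 0 makes a summable, so the partial sums are dominated by the full sums.\<close>

lemma NN_pos: "NN n > 0"
  by (simp add: NN_def)

lemma finite_I [simp]: "finite (I n)"
  by (simp add: I_def)

lemma I_nonempty: "I n \<noteq> {}"
  by (simp add: I_def)

lemma card_I: "real (card (I n)) = real_of_int (NN n)"
  by (simp add: I_def NN_def)

lemma norm2_nonneg [simp]: "norm2 n z \<ge> 0"
  by (simp add: norm2_def sum_nonneg)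

lemma modI_in_I: "modI n k \<in> I n"
proof -
  have "0 \<le> (k + int n) mod NN n" "(k + int n) mod NN n < NN n"
    using NN_pos[of n] by auto
  then show ?thesis
    by (auto simp: modI_def I_def NN_def)
qed

lemma modI_eq_self: "k \<in> I n \<Longrightarrow> modI n k = k"
  by (auto simp: modI_def I_def NN_def)

lemma modI_add_left: "modI n (modI n x + y) = modI n (x + y)"
proof -
  have "(modI n x + y + int n) mod NN n = ((x + int n) mod NN n + y) mod NN n"
    by (simp add: modI_def algebra_simps)
  also have "\<dots> = (x + int n + y) mod NN n"
    by (simp add: mod_add_left_eq)
  finally show ?thesis
    by (simp add: modI_def algebra_simps)
qed

lemma bij_betw_modI_shift: "bij_betw (\<lambda>k. modI n (k + c)) (I n) (I n)"
proof (rule bij_betw_byWitness[where f'="\<lambda>k. modI n (k - c)"])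
  show "\<forall>k\<in>I n. modI n (modI n (k + c) - c) = k"
    using modI_add_left[of n _ "-c"] modI_eq_self by simp
  show "\<forall>k\<in>I n. modI n (modI n (k - c) + c) = k"
    using modI_add_left[of n _ c] modI_eq_self by simp
qed (auto simp: modI_in_I)

lemma sum_modI_shift: "(\<Sum>k\<in>I n. f (modI n (k + c))) = (\<Sum>k\<in>I n. f k)"
  using sum.reindex_bij_betw[OF bij_betw_modI_shift[of n c], of f] by simp

lemma norm_FN_powi [simp]: "cmod (FN n powi k) = 1"
  by (simp add: FN_def norm_power_int)

lemma integral_tJ_mult:
  fixes J :: "int \<Rightarrow> int \<Rightarrow> 'a \<Rightarrow> real"
  assumes J_int: "\<And>i i'. i \<in> I n \<Longrightarrow> i' \<in> I n \<Longrightarrow> integrable M (\<lambda>\<omega>. J i j \<omega> * J i' k \<omega>)"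
  shows "integral\<^sup>L M (\<lambda>\<omega>. tJ n J p j \<omega> * tJ n J q k \<omega>)
       = (\<Sum>i\<in>I n. \<Sum>i'\<in>I n. complex_of_real (integral\<^sup>L M (\<lambda>\<omega>. J i j \<omega> * J i' k \<omega>))
            * (FN n powi (- (i * p)) * FN n powi (- (i' * q))))"
proof -
  define c where "c i i' = FN n powi (- (i * p)) * FN n powi (- (i' * q))" for i i'
  define X where "X i i' \<omega> = complex_of_real (J i j \<omega> * J i' k \<omega>) * c i i'" for i i' \<omega>
  have X_int: "integrable M (X i i')" if "i \<in> I n" "i' \<in> I n" for i i'
    unfolding X_def using J_int[OF that] by (intro integrable_mult_left integrable_of_real)
  have "tJ n J p j \<omega> * tJ n J q k \<omega> = (\<Sum>i\<in>I n. \<Sum>i'\<in>I n. X i i' \<omega>)" for \<omega>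
    unfolding tJ_def sum_product X_def c_def by (intro sum.cong refl) (simp add: algebra_simps)
  then have "integral\<^sup>L M (\<lambda>\<omega>. tJ n J p j \<omega> * tJ n J q k \<omega>)
      = (\<Sum>i\<in>I n. \<Sum>i'\<in>I n. integral\<^sup>L M (X i i'))"
    using X_int by (simp add: Bochner_Integration.integral_sum integrable_sum)
  also have "\<dots> = (\<Sum>i\<in>I n. \<Sum>i'\<in>I n.
                    complex_of_real (integral\<^sup>L M (\<lambda>\<omega>. J i j \<omega> * J i' k \<omega>)) * c i i')"
    unfolding X_def by (simp only: integral_mult_left_zero integral_complex_of_real)
  finally show ?thesis
    unfolding c_def .
qed

lemma norm_integral_tJ_mult_le:
  fixes J :: "int \<Rightarrow> int \<Rightarrow> 'a \<Rightarrow> real" and a :: "int \<Rightarrow> real" and c :: "int \<Rightarrow> int \<Rightarrow> real"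
  assumes J_int: "\<And>i i'. i \<in> I n \<Longrightarrow> i' \<in> I n \<Longrightarrow> integrable M (\<lambda>\<omega>. J i j \<omega> * J i' k \<omega>)"
    and J_cov_le: "\<And>i i'. i \<in> I n \<Longrightarrow> i' \<in> I n \<Longrightarrow>
           \<bar>integral\<^sup>L M (\<lambda>\<omega>. J i j \<omega> * J i' k \<omega>)\<bar> \<le> a (modI n (i' - i)) * c j k / real_of_int (NN n)"
  shows "cmod (integral\<^sup>L M (\<lambda>\<omega>. tJ n J p j \<omega> * tJ n J q k \<omega>)) \<le> (\<Sum>m\<in>I n. a m) * c j k"
proof -
  have "cmod (integral\<^sup>L M (\<lambda>\<omega>. tJ n J p j \<omega> * tJ n J q k \<omega>))
      = cmod (\<Sum>i\<in>I n. \<Sum>i'\<in>I n. complex_of_real (integral\<^sup>L M (\<lambda>\<omega>. J i j \<omega> * J i' k \<omega>))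
                 * (FN n powi (- (i * p)) * FN n powi (- (i' * q))))"
    by (simp only: integral_tJ_mult[OF J_int])
  also have "\<dots> \<le> (\<Sum>i\<in>I n. \<Sum>i'\<in>I n. \<bar>integral\<^sup>L M (\<lambda>\<omega>. J i j \<omega> * J i' k \<omega>)\<bar>)"
    by (rule order_trans[OF norm_sum sum_mono], rule order_trans[OF norm_sum sum_mono])
       (simp add: norm_mult)
  also have "\<dots> \<le> (\<Sum>i\<in>I n. \<Sum>i'\<in>I n. a (modI n (i' - i)) * c j k / real_of_int (NN n))"
    by (intro sum_mono J_cov_le)
  also have "\<dots> = (\<Sum>i\<in>I n. (\<Sum>m\<in>I n. a m) * c j k / real_of_int (NN n))"
    using sum_modI_shift[of a n "- _"] by (simp add: sum_divide_distrib[symmetric] sum_distrib_right[symmetric])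
  also have "\<dots> = (\<Sum>m\<in>I n. a m) * c j k"
    using card_I[of n] NN_pos[of n] by simp
  finally show ?thesis .
qed

lemma sum_cyclic_convolution_le:
  fixes b \<zeta> \<xi> :: "int \<Rightarrow> real"
  assumes b_nonneg: "\<And>l. b l \<ge> 0"
  shows "(\<Sum>j\<in>I n. \<Sum>k\<in>I n. b (modI n (k - j)) * (\<bar>\<zeta> j\<bar> * \<bar>\<xi> k\<bar>))
        \<le> (\<Sum>l\<in>I n. b l) * norm2 n \<zeta> * norm2 n \<xi>"
proof -
  have shift: "(\<Sum>k\<in>I n. b (modI n (k - j)) * (\<bar>\<zeta> j\<bar> * \<bar>\<xi> k\<bar>))
             = (\<Sum>l\<in>I n. b l * (\<bar>\<zeta> j\<bar> * \<bar>\<xi> (modI n (l + j))\<bar>))" for j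
    using sum_modI_shift[of "\<lambda>l. b l * (\<bar>\<zeta> j\<bar> * \<bar>\<xi> (modI n (l + j))\<bar>)" n "-j"]
    by (simp add: modI_add_left modI_eq_self)
  have cauchy_schwarz: "(\<Sum>j\<in>I n. \<bar>\<zeta> j\<bar> * \<bar>\<xi> (modI n (l + j))\<bar>) \<le> norm2 n \<zeta> * norm2 n \<xi>" for l
  proof -
    have "L2_set (\<lambda>j. \<xi> (modI n (l + j))) (I n) = L2_set \<xi> (I n)"
      unfolding L2_set_def using sum_modI_shift[of "\<lambda>x. (\<xi> x)\<^sup>2" n l] by (simp add: add.commute)
    then show ?thesis
      using L2_set_mult_ineq[of \<zeta> "\<lambda>j. \<xi> (modI n (l + j))" "I n"] by (simp add: norm2_def L2_set_def)
  qed
  have "(\<Sum>j\<in>I n. \<Sum>k\<in>I n. b (modI n (k - j)) * (\<bar>\<zeta> j\<bar> * \<bar>\<xi> k\<bar>))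
      = (\<Sum>l\<in>I n. b l * (\<Sum>j\<in>I n. \<bar>\<zeta> j\<bar> * \<bar>\<xi> (modI n (l + j))\<bar>))"
    unfolding shift by (subst sum.swap) (simp add: sum_distrib_left)
  also have "\<dots> \<le> (\<Sum>l\<in>I n. b l * (norm2 n \<zeta> * norm2 n \<xi>))"
    by (intro sum_mono mult_left_mono b_nonneg cauchy_schwarz)
  also have "\<dots> = (\<Sum>l\<in>I n. b l) * norm2 n \<zeta> * norm2 n \<xi>"
    by (simp add: sum_distrib_right mult.assoc)
  finally show ?thesis .
qed

lemma norm_cyclic_bilinear_form_le:
  fixes E :: "int \<Rightarrow> int \<Rightarrow> complex" and b \<zeta> \<xi> :: "int \<Rightarrow> real"
  assumes b_nonneg: "\<And>l. b l \<ge> 0" and A_nonneg: "A \<ge> 0"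
    and E_le: "\<And>j k. j \<in> I n \<Longrightarrow> k \<in> I n \<Longrightarrow> cmod (E j k) \<le> A * b (modI n (k - j))"
  shows "cmod (\<Sum>j\<in>I n. \<Sum>k\<in>I n. E j k * complex_of_real (\<zeta> j * \<xi> k))
         \<le> A * (\<Sum>l\<in>I n. b l) * norm2 n \<zeta> * norm2 n \<xi>"
proof -
  have "cmod (\<Sum>j\<in>I n. \<Sum>k\<in>I n. E j k * complex_of_real (\<zeta> j * \<xi> k))
      \<le> (\<Sum>j\<in>I n. \<Sum>k\<in>I n. cmod (E j k) * (\<bar>\<zeta> j\<bar> * \<bar>\<xi> k\<bar>))"
    by (rule order_trans[OF norm_sum sum_mono], rule order_trans[OF norm_sum sum_mono])
       (simp add: norm_mult abs_mult)
  also have "\<dots> \<le> (\<Sum>j\<in>I n. \<Sum>k\<in>I n. A * b (modI n (k - j)) * (\<bar>\<zeta> j\<bar> * \<bar>\<xi> k\<bar>))"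
    by (intro sum_mono mult_right_mono E_le) auto
  also have "\<dots> = A * (\<Sum>j\<in>I n. \<Sum>k\<in>I n. b (modI n (k - j)) * (\<bar>\<zeta> j\<bar> * \<bar>\<xi> k\<bar>))"
    by (simp add: sum_distrib_left mult.assoc)
  also have "\<dots> \<le> A * ((\<Sum>l\<in>I n. b l) * norm2 n \<zeta> * norm2 n \<xi>)"
    by (intro mult_left_mono sum_cyclic_convolution_le b_nonneg A_nonneg)
  finally show ?thesis
    by (simp add: mult.assoc)
qed

lemma summable_on_int_inverse_square: "(\<lambda>k::int. inverse (real_of_int k ^ 2)) summable_on UNIV"
proof -
  have nat_summable: "(\<lambda>m::nat. inverse (real m ^ 2)) summable_on UNIV"
    using summable_on_UNIV_nonneg_real_iff inverse_power_summable[of 2] by simp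
  have "(\<lambda>k::int. inverse (real_of_int k ^ 2)) summable_on range int"
    by (subst summable_on_reindex) (use nat_summable in \<open>auto simp: o_def\<close>)
  moreover have "(\<lambda>k::int. inverse (real_of_int k ^ 2)) summable_on range (\<lambda>m. - int m)"
    by (subst summable_on_reindex) (use nat_summable in \<open>auto simp: o_def inj_def\<close>)
  moreover have "range int \<union> range (\<lambda>m. - int m) = (UNIV :: int set)"
    by (auto intro: range_eqI[of _ _ "nat \<bar>_\<bar>"] simp: image_iff) presburger
  ultimately show ?thesis
    by (metis summable_on_union)
qed

lemma summable_on_int_if_power_decay:
  fixes a :: "int \<Rightarrow> real"
  assumes a_nonneg: "\<And>k. a k \<ge> 0" and "m \<ge> 2"
    and a_decay: "((\<lambda>k. real_of_int \<bar>k\<bar> ^ m * a k) \<longlongrightarrow> 0) cofinite"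
  shows "a summable_on UNIV"
proof -
  obtain S where "finite S" and S: "\<And>k. k \<notin> S \<Longrightarrow> real_of_int \<bar>k\<bar> ^ m * a k < 1"
    using order_tendstoD(2)[OF a_decay zero_less_one] unfolding eventually_cofinite by blast
  have a_le: "a k \<le> inverse (real_of_int k ^ 2)" if "k \<notin> S \<union> {0}" for k
  proof -
    have k_ge_1: "real_of_int \<bar>k\<bar> \<ge> 1"
      using that by auto
    have "real_of_int \<bar>k\<bar> ^ 2 * a k \<le> real_of_int \<bar>k\<bar> ^ m * a k"
      using k_ge_1 a_nonneg[of k] \<open>m \<ge> 2\<close> by (intro mult_right_mono power_increasing) auto
    also have "\<dots> < 1"
      using S that by auto
    finally show ?thesis
      using k_ge_1 by (simp add: field_simps)
  qed
  have "a summable_on (UNIV - (S \<union> {0}))"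
    by (rule summable_on_comparison_test[OF summable_on_subset[OF summable_on_int_inverse_square]])
       (use a_le a_nonneg in auto)
  moreover have "a summable_on (S \<union> {0})"
    using \<open>finite S\<close> by simp
  ultimately show ?thesis
    using summable_on_union by fastforce
qed

theorem corollaryB8:
  fixes R :: "int \<times> int \<Rightarrow> real"
    and a b :: "int \<Rightarrow> real"
    and M :: "'a measure"
    and n :: nat
    and J :: "int \<Rightarrow> int \<Rightarrow> 'a \<Rightarrow> real"
    and \<zeta> \<xi> :: "int \<Rightarrow> real"
  assumes a_pos: "\<And>k. a k > 0"
    and b_pos: "\<And>l. b l > 0"
    and R_bound: "\<And>k l. \<bar>R (k, l)\<bar> \<le> a k * b l"
    and a_decay: "((\<lambda>k. real_of_int \<bar>k\<bar> ^ 3 * a k) \<longlongrightarrow> 0) cofinite"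
    and b_sum: "b summable_on UNIV"
    and R_field: "stationary_autocorr_pos_spectral R"
    and M: "prob_space M"
    and n_pos: "n \<ge> 1"
    and J_gauss: "centered_gaussian_family M (I n \<times> I n) (\<lambda>(i, j). J i j)"
    and J_int: "\<And>i j k l. i \<in> I n \<Longrightarrow> j \<in> I n \<Longrightarrow> k \<in> I n \<Longrightarrow> l \<in> I n \<Longrightarrow>
                   integrable M (\<lambda>\<omega>. J i j \<omega> * J k l \<omega>)"
    and J_cov: "\<And>i j k l. i \<in> I n \<Longrightarrow> j \<in> I n \<Longrightarrow> k \<in> I n \<Longrightarrow> l \<in> I n \<Longrightarrow>
                   integral\<^sup>L M (\<lambda>\<omega>. J i j \<omega> * J k l \<omega>)
                     = R (modI n (k - i), modI n (l - j)) / real_of_int (NN n)"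
  shows "(SUP p\<in>I n. cmod (\<Sum>j\<in>I n. \<Sum>k\<in>I n.
            integral\<^sup>L M (\<lambda>\<omega>. tJ n J p j \<omega> * tJ n J (modI n (- p)) k \<omega>)
              * complex_of_real (\<zeta> j * \<xi> k)))
         \<le> infsum a UNIV * infsum b UNIV * norm2 n \<zeta> * norm2 n \<xi>"
proof -
  have a_nonneg: "a k \<ge> 0" and b_nonneg: "b k \<ge> 0" for k
    using a_pos[of k] b_pos[of k] by auto
  have A_le: "(\<Sum>m\<in>I n. a m) \<le> infsum a UNIV"
    using summable_on_int_if_power_decay[OF a_nonneg _ a_decay]
    by (intro finite_sum_le_infsum) (auto simp: a_nonneg)
  have B_le: "(\<Sum>l\<in>I n. b l) \<le> infsum b UNIV"
    by (intro finite_sum_le_infsum b_sum) (auto simp: b_nonneg)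
  have "cmod (\<Sum>j\<in>I n. \<Sum>k\<in>I n. integral\<^sup>L M (\<lambda>\<omega>. tJ n J p j \<omega> * tJ n J q k \<omega>)
                 * complex_of_real (\<zeta> j * \<xi> k))
        \<le> (\<Sum>m\<in>I n. a m) * (\<Sum>l\<in>I n. b l) * norm2 n \<zeta> * norm2 n \<xi>" for p q
  proof (rule norm_cyclic_bilinear_form_le[OF b_nonneg sum_nonneg[OF a_nonneg]])
    fix j k assume "j \<in> I n" "k \<in> I n"
    with J_int J_cov R_bound NN_pos[of n] show
      "cmod (integral\<^sup>L M (\<lambda>\<omega>. tJ n J p j \<omega> * tJ n J q k \<omega>)) \<le> (\<Sum>m\<in>I n. a m) * b (modI n (k - j))"
      by (intro norm_integral_tJ_mult_le) (auto simp: abs_div divide_right_mono)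
  qed
  also have "\<dots> \<le> infsum a UNIV * infsum b UNIV * norm2 n \<zeta> * norm2 n \<xi>" for p q
    using A_le B_le sum_nonneg[of "I n" a] sum_nonneg[of "I n" b] a_nonneg b_nonneg
    by (simp only: mult.assoc) (intro mult_mono; simp)
  finally show ?thesis
    by (intro cSUP_least I_nonempty)
qed

end
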